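(* Let $X,Y$ be compact metric spaces and let $\mathcal G\subset\mathrm{Homeo}(X)$, $\mathcal H\subset\mathrm{Homeo}(Y)$ be finitely generated pseudogroups strongly isomorphic via a homeomorphism $\varphi:X\to Y$; let $\mathcal G_1$ be a finite generating set of $\mathcal G$ and $\mathcal H_1=\{\varphi\circ g\circ\varphi^{-1}:g\in\mathcal G_1\}$. Then $h_{top}(\mathcal G,\mathcal G_1)=h_{top}(\mathcal H,\mathcal H_1)$.
   Context: $\mathrm{Homeo}(X)$: homeomorphisms $g:D_g\to R_g$ between open subsets of $X$, composed on natural domains $D_{h\circ g}=g^{-1}(D_h)$. A pseudogroup is a subset of $\mathrm{Homeo}(X)$ containing $\mathrm{id}_X$, closed under composition, inversion, restriction to open subsets, and gluing along open covers of the domain; $\Gamma$ generates $\mathcal G$ if $\bigcup_{g\in\Gamma}(D_g\cup R_g)=X$ and $\mathcal G$ is exactly the set of $g\in\mathrm{Homeo}(X)$ locally equal near each point of $D_g$ to a finite composition of elements of $\Gamma$ and their inverses. $\mathcal G,\mathcal H$ are strongly isomorphic via $\varphi$ if for every $f\in\mathrm{Homeo}(X)$: $\varphi\circ f\circ\varphi^{-1}\in\mathcal H$ iff $f\in\mathcal G$. For a pseudogroup with finite generating set $\Gamma$ on a compact metric space $Z$: $\Gamma_n=\{g_1\circ\cdots\circ g_n:g_i\in\Gamma\}$, $\Gamma_n^x=\{g\in\Gamma_n:x\in D_g\}$; $x,y$ are $(n,\varepsilon)$-separated if some $g\in\Gamma_n^x\cap\Gamma_n^y$ has $d(g(x),g(y))\ge\varepsilon$;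 $s(n,\varepsilon)$ is the maximal cardinality of a subset of $Z$ whose distinct points are pairwise $(n,\varepsilon)$-separated; and the topological entropy is $h_{top}=\lim_{\varepsilon\to0^+}\limsup_{n\to\infty}\frac1n\log s(n,\varepsilon)$. *)

theory Defs
  imports "HOL-Analysis.Analysis"
begin

(* Partial maps X -> X are represented as maps of type 'a \<Rightarrow> 'a option;
 the domain D_g is dom g, the range R_g is ran g. Composition on natural
 domains is map composition (\<circ>\<^sub>m). *)

definition pfun :: "('a \<Rightarrow> 'b option) \<Rightarrow> 'a \<Rightarrow> 'b" where
  "pfun g = (\<lambda>x. the (g x))"

definition phomeo :: "'a::topological_space set \<Rightarrow> ('a \<Rightarrow> 'a option) \<Rightarrow> bool" where
  "phomeo X g \<longleftrightarrow> openin (top_of_set X) (dom g) \<and> openin (top_of_set X) (ran g) \<and>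
     (\<exists>h. homeomorphism (dom g) (ran g) (pfun g) h)"

definition Homeo :: "'a::topological_space set \<Rightarrow> ('a \<Rightarrow> 'a option) set" where
  "Homeo X = {g. phomeo X g}"

definition pid :: "'a set \<Rightarrow> 'a \<Rightarrow> 'a option" where
  "pid X = (\<lambda>x. if x \<in> X then Some x else None)"

definition pinv :: "('a \<Rightarrow> 'a option) \<Rightarrow> 'a \<Rightarrow> 'a option" where
  "pinv g = (\<lambda>y. if y \<in> ran g then Some (THE x. g x = Some y) else None)"

definition pseudogroup :: "'a::topological_space set \<Rightarrow> ('a \<Rightarrow> 'a option) set \<Rightarrow> bool" where
  "pseudogroup X G \<longleftrightarrow>
     G \<subseteq> Homeo X \<and> pid X \<in> G \<and>
     (\<forall>f\<in>G. \<forall>g\<in>G. f \<circ>\<^sub>m g \<in> G) \<and>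
     (\<forall>g\<in>G. pinv g \<in> G) \<and>
     (\<forall>g\<in>G. \<forall>U. openin (top_of_set X) U \<longrightarrow> g |` U \<in> G) \<and>
     (\<forall>g\<in>Homeo X. \<forall>\<U>. (\<forall>U\<in>\<U>. openin (top_of_set X) U) \<and> dom g \<subseteq> \<Union>\<U> \<and>
        (\<forall>U\<in>\<U>. g |` U \<in> G) \<longrightarrow> g \<in> G)"

definition comp_word :: "'a set \<Rightarrow> ('a \<Rightarrow> 'a option) list \<Rightarrow> 'a \<Rightarrow> 'a option" where
  "comp_word X ws = foldr (\<lambda>g acc. g \<circ>\<^sub>m acc) ws (pid X)"

definition generates :: "'a::topological_space set \<Rightarrow> ('a \<Rightarrow> 'a option) set \<Rightarrow> ('a \<Rightarrow> 'a option) set \<Rightarrow> bool" where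
  "generates X \<Gamma> G \<longleftrightarrow>
     \<Gamma> \<subseteq> Homeo X \<and> (\<Union>g\<in>\<Gamma>. dom g \<union> ran g) = X \<and>
     G = {g \<in> Homeo X. \<forall>x\<in>dom g. \<exists>ws U. ws \<noteq> [] \<and> set ws \<subseteq> \<Gamma> \<union> pinv ` \<Gamma> \<and>
            openin (top_of_set X) U \<and> x \<in> U \<and> U \<subseteq> dom g \<and> U \<subseteq> dom (comp_word X ws) \<and>
            (\<forall>y\<in>U. g y = comp_word X ws y)}"

definition finitely_generated :: "'a::topological_space set \<Rightarrow> ('a \<Rightarrow> 'a option) set \<Rightarrow> bool" where
  "finitely_generated X G \<longleftrightarrow> (\<exists>\<Gamma>. finite \<Gamma> \<and> generates X \<Gamma> G)"

definition pconj :: "'a set \<Rightarrow> 'b set \<Rightarrow> ('a \<Rightarrow> 'b) \<Rightarrow> ('a \<Rightarrow> 'a option) \<Rightarrow> 'b \<Rightarrow> 'b option" where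
  "pconj X Y \<phi> f = (\<lambda>y. if y \<in> Y then map_option \<phi> (f (inv_into X \<phi> y)) else None)"

definition strongly_isomorphic ::
  "'a::topological_space set \<Rightarrow> 'b::topological_space set \<Rightarrow> ('a \<Rightarrow> 'b) \<Rightarrow>
   ('a \<Rightarrow> 'a option) set \<Rightarrow> ('b \<Rightarrow> 'b option) set \<Rightarrow> bool" where
  "strongly_isomorphic X Y \<phi> G H \<longleftrightarrow>
     (\<forall>f\<in>Homeo X. pconj X Y \<phi> f \<in> H \<longleftrightarrow> f \<in> G)"

definition Gamma_n :: "'a set \<Rightarrow> ('a \<Rightarrow> 'a option) set \<Rightarrow> nat \<Rightarrow> ('a \<Rightarrow> 'a option) set" where
  "Gamma_n X \<Gamma> n = {comp_word X ws | ws. length ws = n \<and> set ws \<subseteq> \<Gamma>}"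

definition separated :: "'a::metric_space set \<Rightarrow> ('a \<Rightarrow> 'a option) set \<Rightarrow> nat \<Rightarrow> real \<Rightarrow> 'a \<Rightarrow> 'a \<Rightarrow> bool" where
  "separated X \<Gamma> n \<epsilon> x y \<longleftrightarrow>
     (\<exists>g\<in>Gamma_n X \<Gamma> n. x \<in> dom g \<and> y \<in> dom g \<and> dist (pfun g x) (pfun g y) \<ge> \<epsilon>)"

definition sep_num :: "'a::metric_space set \<Rightarrow> ('a \<Rightarrow> 'a option) set \<Rightarrow> nat \<Rightarrow> real \<Rightarrow> nat" where
  "sep_num X \<Gamma> n \<epsilon> = Sup {card S | S. S \<subseteq> X \<and> finite S \<and>
       (\<forall>x\<in>S. \<forall>y\<in>S. x \<noteq> y \<longrightarrow> separated X \<Gamma> n \<epsilon> x y)}"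

definition htop :: "'a::metric_space set \<Rightarrow> ('a \<Rightarrow> 'a option) set \<Rightarrow> ereal" where
  "htop X \<Gamma> = Lim (at_right (0::real))
     (\<lambda>\<epsilon>. limsup (\<lambda>n. ereal (ln (real (sep_num X \<Gamma> n \<epsilon>)) / real n)))"

end

theory Submission
  imports Defs
begin

(* The conjugating homeomorphism \<phi> sends words in the generators to words in the conjugated
   generators, so it maps (n,\<epsilon>)-separated subsets of X injectively to (n,\<delta>)-separated subsets
   of Y, where \<delta> comes from the uniform continuity of \<phi>\<inverse> on the compact space Y. Hence
   s_X(n,\<epsilon>) \<le> s_Y(n,\<delta>); as s(n,\<epsilon>) decreases in \<epsilon>, the entropy is a supremum over \<epsilon>,
   so h_top(G,G1) \<le> h_top(H,H1), and \<phi>\<inverse> gives the reverse inequality. Compactness also makes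
   s(n,\<epsilon>) finite: distinct points of a separated set have distinct itineraries through a
   finite \<epsilon>/2-net. *)

(* Holds for m = 0 as well because ln 0 = 0; hence no lower bound s(n,\<epsilon>) \<ge> 1 is needed. *)
lemma ln_real_mono:
  fixes m n :: nat
  assumes "m \<le> n"
  shows "ln (real m) \<le> ln (real n)"
  using assms by (cases "m = 0"; cases "n = 0") (auto intro: ln_ge_zero)

lemma Lim_at_right_0_antimono:
  fixes f :: "real \<Rightarrow> 'a::{complete_linorder, linorder_topology}"
  assumes "\<And>a b. 0 < a \<Longrightarrow> a \<le> b \<Longrightarrow> f b \<le> f a"
  shows "Lim (at_right 0) f = (SUP e\<in>{0<..}. f e)"
proof (rule tendsto_Lim)
  show "(f \<longlongrightarrow> (SUP e\<in>{0<..}. f e)) (at_right 0)"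
  proof (rule order_tendstoI)
    fix y assume "y < (SUP e\<in>{0<..}. f e)"
    then obtain e0 where "e0 > 0" "y < f e0" by (auto simp: less_SUP_iff)
    then show "\<forall>\<^sub>F x in at_right 0. y < f x"
      unfolding eventually_at_right_field using assms by (intro exI[of _ e0]) (force intro: less_le_trans)
  next
    fix y assume "(SUP e\<in>{0<..}. f e) < y"
    then have "\<forall>x>0. f x < y" by (metis SUP_upper greaterThan_iff le_less_trans)
    then show "\<forall>\<^sub>F x in at_right 0. f x < y"
      unfolding eventually_at_right_field by (intro exI[of _ 1]) auto
  qed
qed simp

lemma Homeo_dom_ran_subset:
  assumes "g \<in> Homeo X"
  shows "dom g \<subseteq> X" "ran g \<subseteq> X"
proof -
  have "openin (top_of_set X) (dom g)" "openin (top_of_set X) (ran g)"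
    using assms by (auto simp: Homeo_def phomeo_def)
  then show "dom g \<subseteq> X" "ran g \<subseteq> X" by (simp_all add: openin_imp_subset)
qed

lemma ran_comp_word:
  assumes "set ws \<subseteq> \<Gamma>" "\<forall>g\<in>\<Gamma>. ran g \<subseteq> X"
  shows "ran (comp_word X ws) \<subseteq> X"
  using assms(1)
proof (induction ws)
  case Nil
  then show ?case by (auto simp: comp_word_def pid_def ran_def)
next
  case (Cons g ws)
  then have "ran g \<subseteq> X" using assms(2) by auto
  then show ?case by (auto simp: comp_word_def ran_def map_comp_def split: option.splits)
qed

lemma ran_Gamma_n:
  assumes "\<forall>g\<in>\<Gamma>. ran g \<subseteq> X" "g \<in> Gamma_n X \<Gamma> n"
  shows "ran g \<subseteq> X"
  using assms ran_comp_word unfolding Gamma_n_def by blast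

lemma finite_Gamma_n:
  assumes "finite \<Gamma>"
  shows "finite (Gamma_n X \<Gamma> n)"
proof -
  have "Gamma_n X \<Gamma> n = comp_word X ` {ws. set ws \<subseteq> \<Gamma> \<and> length ws = n}"
    by (auto simp: Gamma_n_def)
  then show ?thesis using finite_lists_length_eq[OF assms] by simp
qed

lemma separated_iff:
  "separated X \<Gamma> n \<epsilon> x y \<longleftrightarrow>
     (\<exists>g\<in>Gamma_n X \<Gamma> n. \<exists>a b. g x = Some a \<and> g y = Some b \<and> \<epsilon> \<le> dist a b)"
  unfolding separated_def pfun_def by fastforce

definition separated_sets ::
  "'a::metric_space set \<Rightarrow> ('a \<Rightarrow> 'a option) set \<Rightarrow> nat \<Rightarrow> real \<Rightarrow> 'a set set" where
  "separated_sets X \<Gamma> n \<epsilon> = {S. S \<subseteq> X \<and> finite S \<and> pairwise (separated X \<Gamma> n \<epsilon>) S}"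

lemma sep_num_eq_Sup: "sep_num X \<Gamma> n \<epsilon> = Sup (card ` separated_sets X \<Gamma> n \<epsilon>)"
  unfolding sep_num_def separated_sets_def pairwise_def setcompr_eq_image ..

lemma bdd_above_card_separated_sets:
  fixes X :: "'a::metric_space set"
  assumes "compact X" "finite \<Gamma>" "\<forall>g\<in>\<Gamma>. ran g \<subseteq> X" "\<epsilon> > 0"
  shows "bdd_above (card ` separated_sets X \<Gamma> n \<epsilon>)"
proof -
  have "X \<subseteq> (\<Union>c\<in>X. ball c (\<epsilon>/2))" using assms(4) by auto
  then obtain C where C: "finite C" "X \<subseteq> (\<Union>c\<in>C. ball c (\<epsilon>/2))"
    using compactE_image[OF assms(1)] by (metis open_ball)
  then have "\<forall>x\<in>X. \<exists>a\<in>C. dist a x < \<epsilon>/2"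
    unfolding subset_eq by (metis UN_E mem_ball)
  then obtain c where c: "\<And>x. x \<in> X \<Longrightarrow> c x \<in> C \<and> dist (c x) x < \<epsilon>/2"
    by metis
  define itinerary where "itinerary x = restrict (\<lambda>g. map_option c (g x)) (Gamma_n X \<Gamma> n)" for x
  define Itineraries where "Itineraries = Pi\<^sub>E (Gamma_n X \<Gamma> n) (\<lambda>_. insert None (Some ` C))"
  have "finite Itineraries"
    unfolding Itineraries_def using finite_Gamma_n[OF assms(2)] C(1) by (simp add: finite_PiE)
  have itinerary_in: "itinerary x \<in> Itineraries" for x
  proof -
    have "map_option c (g x) \<in> insert None (Some ` C)" if "g \<in> Gamma_n X \<Gamma> n" for g
    proof (cases "g x")
      case (Some a)
      then have "a \<in> X" using ran_Gamma_n[OF assms(3) that] by (auto simp: ran_def)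
      then show ?thesis using Some c by auto
    qed simp
    then show ?thesis by (simp add: itinerary_def Itineraries_def)
  qed
  have "card S \<le> card Itineraries" if "S \<in> separated_sets X \<Gamma> n \<epsilon>" for S
  proof -
    have "inj_on itinerary S"
    proof (rule inj_onI, rule ccontr)
      fix x y assume "x \<in> S" "y \<in> S" "itinerary x = itinerary y" "x \<noteq> y"
      then have "separated X \<Gamma> n \<epsilon> x y"
        using that by (auto simp: separated_sets_def dest: pairwiseD)
      then obtain g a b where g: "g \<in> Gamma_n X \<Gamma> n" "g x = Some a" "g y = Some b" "\<epsilon> \<le> dist a b"
        unfolding separated_iff by blast
      then have "a \<in> X" "b \<in> X" using ran_Gamma_n[OF assms(3) g(1)] by (auto simp: ran_def)
      have "c a = c b"
        using g fun_cong[OF \<open>itinerary x = itinerary y\<close>, of g] by (simp add: itinerary_def)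
      then have "dist a b < \<epsilon>"
        using c[OF \<open>a \<in> X\<close>] c[OF \<open>b \<in> X\<close>] dist_triangle3[of a b "c a"] by simp
      then show False using g(4) by simp
    qed
    then show ?thesis
      using itinerary_in by (intro card_inj_on_le[OF _ _ \<open>finite Itineraries\<close>]) auto
  qed
  then show ?thesis by (intro bdd_aboveI[of _ "card Itineraries"]) auto
qed

lemma sep_num_le_sep_num:
  fixes X :: "'a::metric_space set" and Y :: "'b::metric_space set"
  assumes "bdd_above (card ` separated_sets Y \<Delta> m \<delta>)" "inj_on f X" "f ` X \<subseteq> Y"
    and "\<And>x y. x \<in> X \<Longrightarrow> y \<in> X \<Longrightarrow> separated X \<Gamma> n \<epsilon> x y \<Longrightarrow> separated Y \<Delta> m \<delta> (f x) (f y)"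
  shows "sep_num X \<Gamma> n \<epsilon> \<le> sep_num Y \<Delta> m \<delta>"
  unfolding sep_num_eq_Sup
proof (rule cSup_subset_mono)
  show "card ` separated_sets X \<Gamma> n \<epsilon> \<noteq> {}"
    by (auto simp: separated_sets_def)
  show "card ` separated_sets X \<Gamma> n \<epsilon> \<subseteq> card ` separated_sets Y \<Delta> m \<delta>"
  proof
    fix k assume "k \<in> card ` separated_sets X \<Gamma> n \<epsilon>"
    then obtain S where S: "S \<subseteq> X" "finite S" "pairwise (separated X \<Gamma> n \<epsilon>) S" "k = card S"
      unfolding separated_sets_def by blast
    have "pairwise (separated Y \<Delta> m \<delta>) (f ` S)"
    proof (rule pairwise_imageI)
      fix x y assume "x \<in> S" "y \<in> S" "x \<noteq> y"
      then show "separated Y \<Delta> m \<delta> (f x) (f y)"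
        using S(1) pairwiseD[OF S(3)] assms(4) by blast
    qed
    then have "f ` S \<in> separated_sets Y \<Delta> m \<delta>"
      using S(1,2) assms(3) by (auto simp: separated_sets_def)
    moreover have "card (f ` S) = k"
      using card_image[OF inj_on_subset[OF assms(2) S(1)]] S(4) by simp
    ultimately show "k \<in> card ` separated_sets Y \<Delta> m \<delta>" by (metis image_eqI)
  qed
qed (fact assms(1))

lemma sep_num_antimono:
  fixes X :: "'a::metric_space set"
  assumes "compact X" "finite \<Gamma>" "\<forall>g\<in>\<Gamma>. ran g \<subseteq> X" "0 < \<epsilon>" "\<epsilon> \<le> \<epsilon>'"
  shows "sep_num X \<Gamma> n \<epsilon>' \<le> sep_num X \<Gamma> n \<epsilon>"
proof (rule sep_num_le_sep_num[where f = id])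
  show "separated X \<Gamma> n \<epsilon> (id x) (id y)" if "separated X \<Gamma> n \<epsilon>' x y" for x y
    using that assms(5) unfolding separated_def by force
qed (use bdd_above_card_separated_sets[OF assms(1-4)] in auto)

definition htop_at :: "'a::metric_space set \<Rightarrow> ('a \<Rightarrow> 'a option) set \<Rightarrow> real \<Rightarrow> ereal" where
  "htop_at X \<Gamma> \<epsilon> = limsup (\<lambda>n. ereal (ln (real (sep_num X \<Gamma> n \<epsilon>)) / real n))"

lemma htop_at_le_htop_at:
  fixes X :: "'a::metric_space set" and Y :: "'b::metric_space set"
  assumes "\<And>n. sep_num X \<Gamma> n \<epsilon> \<le> sep_num Y \<Delta> n \<delta>"
  shows "htop_at X \<Gamma> \<epsilon> \<le> htop_at Y \<Delta> \<delta>"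
  unfolding htop_at_def
  using ln_real_mono[OF assms] by (intro Limsup_mono always_eventually allI) (simp add: divide_right_mono)

lemma htop_eq_SUP_htop_at:
  fixes X :: "'a::metric_space set"
  assumes "compact X" "finite \<Gamma>" "\<forall>g\<in>\<Gamma>. ran g \<subseteq> X"
  shows "htop X \<Gamma> = (SUP \<epsilon>\<in>{0<..}. htop_at X \<Gamma> \<epsilon>)"
proof -
  have "htop X \<Gamma> = Lim (at_right 0) (htop_at X \<Gamma>)"
    by (simp add: htop_def htop_at_def [abs_def])
  also have "\<dots> = (SUP \<epsilon>\<in>{0<..}. htop_at X \<Gamma> \<epsilon>)"
    using sep_num_antimono[OF assms] htop_at_le_htop_at by (intro Lim_at_right_0_antimono) blast
  finally show ?thesis .
qed

lemma homeomorphism_inj_on: "homeomorphism X Y \<phi> \<psi> \<Longrightarrow> inj_on \<phi> X"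
  by (metis homeomorphism_apply1 inj_on_inverseI)

lemma compact_homeomorphism_dist_bounded_below:
  fixes X :: "'a::metric_space set" and Y :: "'b::metric_space set"
  assumes "compact Y" "homeomorphism X Y \<phi> \<psi>" "\<epsilon> > 0"
  obtains \<delta> where "\<delta> > 0" "\<And>a b. a \<in> X \<Longrightarrow> b \<in> X \<Longrightarrow> \<epsilon> \<le> dist a b \<Longrightarrow> \<delta> \<le> dist (\<phi> a) (\<phi> b)"
proof -
  have "uniformly_continuous_on Y \<psi>"
    using assms(1,2) compact_uniformly_continuous by (auto simp: homeomorphism_def)
  then obtain \<delta> where \<delta>: "\<delta> > 0" "\<forall>y\<in>Y. \<forall>y'\<in>Y. dist y' y < \<delta> \<longrightarrow> dist (\<psi> y') (\<psi> y) < \<epsilon>"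
    using assms(3) unfolding uniformly_continuous_on_def by blast
  have "\<delta> \<le> dist (\<phi> a) (\<phi> b)" if "a \<in> X" "b \<in> X" "\<epsilon> \<le> dist a b" for a b
  proof (rule ccontr)
    assume "\<not> \<delta> \<le> dist (\<phi> a) (\<phi> b)"
    moreover have "\<phi> a \<in> Y" "\<phi> b \<in> Y"
      using that homeomorphism_image1[OF assms(2)] by auto
    ultimately have "dist (\<psi> (\<phi> a)) (\<psi> (\<phi> b)) < \<epsilon>"
      using \<delta>(2) by auto
    then show False
      using that homeomorphism_apply1[OF assms(2)] by simp
  qed
  then show thesis using that \<delta>(1) by blast
qed

lemma pconj_apply:
  assumes "homeomorphism X Y \<phi> \<psi>" "x \<in> X"
  shows "pconj X Y \<phi> g (\<phi> x) = map_option \<phi> (g x)"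
proof -
  have "\<phi> x \<in> Y" using assms homeomorphism_image1 by blast
  moreover have "inv_into X \<phi> (\<phi> x) = x"
    using inv_into_f_f[OF homeomorphism_inj_on[OF assms(1)] assms(2)] .
  ultimately show ?thesis by (simp add: pconj_def)
qed

lemma pconj_pid:
  assumes "homeomorphism X Y \<phi> \<psi>"
  shows "pconj X Y \<phi> (pid X) = pid Y"
proof
  fix y
  show "pconj X Y \<phi> (pid X) y = pid Y y"
  proof (cases "y \<in> Y")
    case True
    then obtain x where "x \<in> X" "y = \<phi> x" using homeomorphism_image1[OF assms] by blast
    then show ?thesis using True pconj_apply[OF assms] by (simp add: pid_def)
  qed (simp add: pconj_def pid_def)
qed

lemma pconj_map_comp:
  assumes "homeomorphism X Y \<phi> \<psi>" "ran g \<subseteq> X"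
  shows "pconj X Y \<phi> (f \<circ>\<^sub>m g) = pconj X Y \<phi> f \<circ>\<^sub>m pconj X Y \<phi> g"
proof
  fix y
  show "pconj X Y \<phi> (f \<circ>\<^sub>m g) y = (pconj X Y \<phi> f \<circ>\<^sub>m pconj X Y \<phi> g) y"
  proof (cases "y \<in> Y")
    case True
    then obtain x where x: "x \<in> X" "y = \<phi> x" using homeomorphism_image1[OF assms(1)] by blast
    show ?thesis
    proof (cases "g x")
      case (Some z)
      then have "z \<in> X" using assms(2) by (auto simp: ran_def)
      then show ?thesis using x Some pconj_apply[OF assms(1)] by (simp add: map_comp_def)
    qed (use x pconj_apply[OF assms(1)] in \<open>simp add: map_comp_def\<close>)
  qed (simp add: pconj_def map_comp_def)
qed

lemma pconj_comp_word:
  assumes "homeomorphism X Y \<phi> \<psi>" "set ws \<subseteq> \<Gamma>" "\<forall>g\<in>\<Gamma>. ran g \<subseteq> X"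
  shows "pconj X Y \<phi> (comp_word X ws) = comp_word Y (map (pconj X Y \<phi>) ws)"
  using assms(2)
proof (induction ws)
  case Nil
  then show ?case using pconj_pid[OF assms(1)] by (simp add: comp_word_def)
next
  case (Cons g ws)
  have "ran (comp_word X ws) \<subseteq> X" using ran_comp_word Cons.prems assms(3) by auto
  then have "pconj X Y \<phi> (comp_word X (g # ws)) = pconj X Y \<phi> g \<circ>\<^sub>m pconj X Y \<phi> (comp_word X ws)"
    using pconj_map_comp[OF assms(1)] by (simp add: comp_word_def)
  with Cons show ?case by (simp add: comp_word_def)
qed

lemma pconj_Gamma_n_subset:
  assumes "homeomorphism X Y \<phi> \<psi>" "\<forall>g\<in>\<Gamma>. ran g \<subseteq> X"
  shows "pconj X Y \<phi> ` Gamma_n X \<Gamma> n \<subseteq> Gamma_n Y (pconj X Y \<phi> ` \<Gamma>) n"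
proof
  fix h assume "h \<in> pconj X Y \<phi> ` Gamma_n X \<Gamma> n"
  then obtain ws where ws: "length ws = n" "set ws \<subseteq> \<Gamma>" "h = pconj X Y \<phi> (comp_word X ws)"
    by (auto simp: Gamma_n_def)
  then have "h = comp_word Y (map (pconj X Y \<phi>) ws)"
    using pconj_comp_word[OF assms(1) ws(2) assms(2)] by simp
  moreover have "set (map (pconj X Y \<phi>) ws) \<subseteq> pconj X Y \<phi> ` \<Gamma>" using ws(2) by auto
  ultimately show "h \<in> Gamma_n Y (pconj X Y \<phi> ` \<Gamma>) n"
    using ws(1) unfolding Gamma_n_def by (metis (mono_tags, lifting) length_map mem_Collect_eq)
qed

lemma ran_pconj:
  assumes "homeomorphism X Y \<phi> \<psi>" "ran g \<subseteq> X"
  shows "ran (pconj X Y \<phi> g) \<subseteq> Y"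
proof
  fix z assume "z \<in> ran (pconj X Y \<phi> g)"
  then obtain y w where "g (inv_into X \<phi> y) = Some w" "z = \<phi> w"
    by (auto simp: ran_def pconj_def split: if_splits)
  then show "z \<in> Y" using assms homeomorphism_image1 by (fastforce simp: ran_def)
qed

lemma pconj_pconj:
  assumes "homeomorphism X Y \<phi> \<psi>" "dom g \<subseteq> X" "ran g \<subseteq> X"
  shows "pconj Y X \<psi> (pconj X Y \<phi> g) = g"
proof
  fix x
  show "pconj Y X \<psi> (pconj X Y \<phi> g) x = g x"
  proof (cases "x \<in> X")
    case True
    then have "\<phi> x \<in> Y" "\<psi> (\<phi> x) = x"
      using homeomorphism_image1[OF assms(1)] homeomorphism_apply1[OF assms(1)] by auto
    then have "pconj Y X \<psi> (pconj X Y \<phi> g) x = map_option \<psi> (map_option \<phi> (g x))"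
      using pconj_apply[OF homeomorphism_symD[OF assms(1)] \<open>\<phi> x \<in> Y\<close>] pconj_apply[OF assms(1) True]
      by simp
    also have "\<dots> = g x"
      using assms(3) homeomorphism_apply1[OF assms(1)] by (cases "g x") (auto simp: ran_def)
    finally show ?thesis .
  next
    case False
    then have "x \<notin> dom g" using assms(2) by blast
    then show ?thesis using False by (simp add: pconj_def domIff)
  qed
qed

lemma separated_pconj:
  assumes "homeomorphism X Y \<phi> \<psi>" "\<forall>g\<in>\<Gamma>. ran g \<subseteq> X" "x \<in> X" "y \<in> X"
    and "\<And>a b. a \<in> X \<Longrightarrow> b \<in> X \<Longrightarrow> \<epsilon> \<le> dist a b \<Longrightarrow> \<delta> \<le> dist (\<phi> a) (\<phi> b)"
    and "separated X \<Gamma> n \<epsilon> x y"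
  shows "separated Y (pconj X Y \<phi> ` \<Gamma>) n \<delta> (\<phi> x) (\<phi> y)"
proof -
  obtain g a b where g: "g \<in> Gamma_n X \<Gamma> n" "g x = Some a" "g y = Some b" "\<epsilon> \<le> dist a b"
    using assms(6) unfolding separated_iff by blast
  then have "a \<in> X" "b \<in> X" using ran_Gamma_n[OF assms(2) g(1)] by (auto simp: ran_def)
  moreover have "pconj X Y \<phi> g (\<phi> x) = Some (\<phi> a)" "pconj X Y \<phi> g (\<phi> y) = Some (\<phi> b)"
    using g(2,3) pconj_apply[OF assms(1)] assms(3,4) by auto
  moreover have "pconj X Y \<phi> g \<in> Gamma_n Y (pconj X Y \<phi> ` \<Gamma>) n"
    using pconj_Gamma_n_subset[OF assms(1,2)] g(1) by blast
  ultimately show ?thesis unfolding separated_iff using g(4) assms(5) by blast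
qed

lemma sep_num_le_sep_num_pconj:
  fixes X :: "'a::metric_space set" and Y :: "'b::metric_space set"
  assumes "compact Y" "homeomorphism X Y \<phi> \<psi>" "finite \<Gamma>" "\<forall>g\<in>\<Gamma>. ran g \<subseteq> X" "\<epsilon> > 0"
  obtains \<delta> where "\<delta> > 0" "\<And>n. sep_num X \<Gamma> n \<epsilon> \<le> sep_num Y (pconj X Y \<phi> ` \<Gamma>) n \<delta>"
proof -
  obtain \<delta> where \<delta>: "\<delta> > 0" "\<And>a b. a \<in> X \<Longrightarrow> b \<in> X \<Longrightarrow> \<epsilon> \<le> dist a b \<Longrightarrow> \<delta> \<le> dist (\<phi> a) (\<phi> b)"
    using compact_homeomorphism_dist_bounded_below[OF assms(1,2,5)] by blast
  have "bdd_above (card ` separated_sets Y (pconj X Y \<phi> ` \<Gamma>) n \<delta>)" for n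
    using assms(3,4) ran_pconj[OF assms(2)] \<delta>(1)
    by (intro bdd_above_card_separated_sets[OF assms(1)]) auto
  then have "sep_num X \<Gamma> n \<epsilon> \<le> sep_num Y (pconj X Y \<phi> ` \<Gamma>) n \<delta>" for n
    using homeomorphism_inj_on[OF assms(2)] homeomorphism_image1[OF assms(2)]
      separated_pconj[OF assms(2,4) _ _ \<delta>(2)]
    by (intro sep_num_le_sep_num) auto
  with \<delta>(1) show thesis using that by blast
qed

lemma htop_le_htop_pconj:
  fixes X :: "'a::metric_space set" and Y :: "'b::metric_space set"
  assumes "compact X" "compact Y" "homeomorphism X Y \<phi> \<psi>" "finite \<Gamma>" "\<forall>g\<in>\<Gamma>. ran g \<subseteq> X"
  shows "htop X \<Gamma> \<le> htop Y (pconj X Y \<phi> ` \<Gamma>)"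
proof -
  have "finite (pconj X Y \<phi> ` \<Gamma>)" "\<forall>h\<in>pconj X Y \<phi> ` \<Gamma>. ran h \<subseteq> Y"
    using assms(4,5) ran_pconj[OF assms(3)] by auto
  note htop_Y = htop_eq_SUP_htop_at[OF assms(2) this]
  have "htop_at X \<Gamma> \<epsilon> \<le> htop Y (pconj X Y \<phi> ` \<Gamma>)" if \<epsilon>: "\<epsilon> > 0" for \<epsilon>
  proof -
    obtain \<delta> where "\<delta> > 0" "\<And>n. sep_num X \<Gamma> n \<epsilon> \<le> sep_num Y (pconj X Y \<phi> ` \<Gamma>) n \<delta>"
      using sep_num_le_sep_num_pconj[OF assms(2-5) \<epsilon>] by blast
    then show ?thesis unfolding htop_Y by (intro SUP_upper2 htop_at_le_htop_at) auto
  qed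
  then show ?thesis unfolding htop_eq_SUP_htop_at[OF assms(1,4,5)] by (auto intro: SUP_least)
qed

theorem mainTheorem15:
  fixes X :: "'a::metric_space set" and Y :: "'b::metric_space set"
    and G :: "('a \<Rightarrow> 'a option) set" and H :: "('b \<Rightarrow> 'b option) set"
    and G1 :: "('a \<Rightarrow> 'a option) set" and \<phi> :: "'a \<Rightarrow> 'b"
  assumes "compact X" and "compact Y"
    and "pseudogroup X G" and "pseudogroup Y H"
    and "finitely_generated X G" and "finitely_generated Y H"
    and "\<exists>\<psi>. homeomorphism X Y \<phi> \<psi>"
    and "strongly_isomorphic X Y \<phi> G H"
    and "finite G1" and "generates X G1 G"
  shows "htop X G1 = htop Y (pconj X Y \<phi> ` G1)"
proof -
  obtain \<psi> where \<phi>: "homeomorphism X Y \<phi> \<psi>" using assms(7) by blast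
  have G1: "dom g \<subseteq> X" "ran g \<subseteq> X" if "g \<in> G1" for g
    using that assms(10) Homeo_dom_ran_subset by (auto simp: generates_def)
  have "htop X G1 \<le> htop Y (pconj X Y \<phi> ` G1)"
    using htop_le_htop_pconj[OF assms(1,2) \<phi> assms(9)] G1 by blast
  moreover have "htop Y (pconj X Y \<phi> ` G1) \<le> htop X (pconj Y X \<psi> ` pconj X Y \<phi> ` G1)"
    using htop_le_htop_pconj[OF assms(2,1) homeomorphism_symD[OF \<phi>]] assms(9) ran_pconj[OF \<phi>] G1
    by blast
  moreover have "pconj Y X \<psi> ` pconj X Y \<phi> ` G1 = G1"
    using pconj_pconj[OF \<phi>] G1 by (simp add: image_image cong: image_cong)
  ultimately show ?thesis by simp
qed

end
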